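(* Let $f:[0,1]\to\mathbb R$ be Lipschitz continuous and $a<b$ real numbers. Then $\int_{f^{-1}((a,b))}f'(t)\,dt\in[a-b,\,b-a]$. *)

theory Defs
  imports "HOL-Analysis.Analysis"
begin

end

theory Submission
  imports Defs
begin

(* Let G be f with its argument clamped to [0, 1] and its values clamped to [a, b]. G is Lipschitz
   on the whole line, agrees with f near every point of the band {t. a < f t < b} inside (0, 1), and
   off the band it takes one of its extreme values a or b, so G' vanishes there wherever it exists.
   Hence the integral of f' over the band is the integral of G' over [0, 1], which by the fundamental
   theorem of calculus for Lipschitz functions is G 1 - G 0, a number in [a - b, b - a].

   The fundamental theorem follows from the change of variables formula for the strictly increasing
   Lipschitz function G + (L + 1) x, once one knows Lebesgue's theorem that monotone Lipschitz
   functions are differentiable almost everywhere. The latter is proved by a Vitali covering argument: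
   the points where the difference quotients oscillate across two rationals p < q form a null set. *)

section \<open>Vitali coverings by intervals and slope gaps of monotone functions\<close>

lemma negligible_countable:
  fixes S :: "'a::euclidean_space set"
  assumes "countable S"
  shows "negligible S"
  using negligible_countable_Union[of "(\<lambda>x. {x}) ` S"] assms by auto

lemma Vitali_covering_intervals:
  fixes S U :: "real set" and P :: "real \<Rightarrow> real \<Rightarrow> bool"
  assumes "open U" "S \<subseteq> U"
    and fine: "\<And>x e. x \<in> S \<Longrightarrow> 0 < e \<Longrightarrow> \<exists>c d. c < d \<and> c \<le> x \<and> x \<le> d \<and> d - c < e \<and> P c d"
  obtains C where "countable C" "\<And>c d. (c, d) \<in> C \<Longrightarrow> c < d \<and> {c..d} \<subseteq> U \<and> P c d"
    "disjoint_family_on (\<lambda>(c, d). {c..d}) C" "negligible (S - (\<Union>(c, d)\<in>C. {c..d}))"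
proof -
  define K where "K = {(c, d). c < d \<and> {c..d} \<subseteq> U \<and> P c d}"
  define mid where "mid = (\<lambda>(c, d). (c + d) / 2 :: real)"
  define rad where "rad = (\<lambda>(c, d). (d - c) / 2 :: real)"
  have cball_eq: "cball (mid i) (rad i) = (\<lambda>(c, d). {c..d}) i" if "i \<in> K" for i
    using that by (auto simp: K_def mid_def rad_def cball_eq_atLeastAtMost field_simps)
  obtain C where C: "countable C" "C \<subseteq> K"
    "pairwise (\<lambda>i j. disjnt (cball (mid i) (rad i)) (cball (mid j) (rad j))) C"
    "negligible (S - (\<Union>i\<in>C. cball (mid i) (rad i)))"
  proof (rule Vitali_covering_theorem_cballs[of K rad S mid])
    show "0 < rad i" if "i \<in> K" for i using that by (auto simp: K_def rad_def)
    show "\<exists>i. i \<in> K \<and> x \<in> cball (mid i) (rad i) \<and> rad i < e" if "x \<in> S" "0 < e" for x e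
    proof -
      obtain \<delta> where "\<delta> > 0" "ball x \<delta> \<subseteq> U"
        using assms(1,2) \<open>x \<in> S\<close> open_contains_ball by blast
      then obtain c d where cd: "c < d" "c \<le> x" "x \<le> d" "d - c < min \<delta> e" "P c d"
        using fine[OF \<open>x \<in> S\<close>, of "min \<delta> e"] \<open>0 < e\<close> by auto
      then have "{c..d} \<subseteq> U" using \<open>ball x \<delta> \<subseteq> U\<close> by (force simp: dist_real_def)
      then have "(c, d) \<in> K" using cd by (simp add: K_def)
      with cd show ?thesis using cball_eq[of "(c, d)"] by (intro exI[of _ "(c, d)"]) (auto simp: rad_def)
    qed
  qed blast
  show ?thesis
  proof
    show "countable C" by (fact C(1))
    show "c < d \<and> {c..d} \<subseteq> U \<and> P c d" if "(c, d) \<in> C" for c d using that C(2) by (auto simp: K_def)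
    show "disjoint_family_on (\<lambda>(c, d). {c..d}) C"
      using C(2,3) cball_eq unfolding disjoint_family_on_def pairwise_def disjnt_def by (metis subsetD)
    show "negligible (S - (\<Union>(c, d)\<in>C. {c..d}))"
      using C(2,4) cball_eq by (metis (no_types, lifting) SUP_cong subsetD)
  qed
qed

lemma emeasure_disjoint_UN_compare:
  assumes "countable C" "disjoint_family_on A C"
    and "\<And>i. i \<in> C \<Longrightarrow> A i \<in> sets M" "\<And>i. i \<in> C \<Longrightarrow> A i \<in> sets N"
    and "\<And>i. i \<in> C \<Longrightarrow> x * emeasure M (A i) \<le> y * emeasure N (A i)"
  shows "x * emeasure M (\<Union>i\<in>C. A i) \<le> y * emeasure N (\<Union>i\<in>C. A i)"
proof -
  have "x * emeasure M (\<Union>i\<in>C. A i) = (\<integral>\<^sup>+i. x * emeasure M (A i) \<partial>count_space C)"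
    using assms(1-3) by (simp add: emeasure_UN_countable nn_integral_cmult)
  also have "\<dots> \<le> (\<integral>\<^sup>+i. y * emeasure N (A i) \<partial>count_space C)"
    using assms(5) by (intro nn_integral_mono) simp
  also have "\<dots> = y * emeasure N (\<Union>i\<in>C. A i)"
    using assms(1,2,4) by (simp add: emeasure_UN_countable nn_integral_cmult)
  finally show ?thesis .
qed

lemma Vitali_nested_covering_intervals:
  fixes E U :: "real set" and P Q :: "real \<Rightarrow> real \<Rightarrow> bool"
  assumes "open U" "E \<subseteq> U"
    and fine_P: "\<And>x e. x \<in> E \<Longrightarrow> 0 < e \<Longrightarrow> \<exists>c d. c < d \<and> c \<le> x \<and> x \<le> d \<and> d - c < e \<and> P c d"
    and fine_Q: "\<And>x e. x \<in> E \<Longrightarrow> 0 < e \<Longrightarrow> \<exists>c d. c < d \<and> c \<le> x \<and> x \<le> d \<and> d - c < e \<and> Q c d"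
  obtains C1 C2 where
    "countable C1" "disjoint_family_on (\<lambda>(c, d). {c..d}) C1"
    "\<And>c d. (c, d) \<in> C1 \<Longrightarrow> c < d \<and> {c..d} \<subseteq> U \<and> P c d"
    "countable C2" "disjoint_family_on (\<lambda>(c, d). {c..d}) C2"
    "\<And>c d. (c, d) \<in> C2 \<Longrightarrow> c < d \<and> Q c d"
    "(\<Union>(c, d)\<in>C2. {c..d}) \<subseteq> (\<Union>(c, d)\<in>C1. {c..d})"
    "negligible (E - (\<Union>(c, d)\<in>C2. {c..d}))"
proof -
  obtain C1 where C1: "countable C1" "\<And>c d. (c, d) \<in> C1 \<Longrightarrow> c < d \<and> {c..d} \<subseteq> U \<and> P c d"
    "disjoint_family_on (\<lambda>(c, d). {c..d}) C1" "negligible (E - (\<Union>(c, d)\<in>C1. {c..d}))"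
    using Vitali_covering_intervals[OF assms(1,2) fine_P] by blast
  \<comment> \<open>Covering inside the open interiors keeps the second cover inside the first; only the
     countably many endpoints of the first cover are lost.\<close>
  define W where "W = (\<Union>(c, d)\<in>C1. {c<..<d})"
  have "open W" by (auto simp: W_def)
  have "E - W \<subseteq> (E - (\<Union>(c, d)\<in>C1. {c..d})) \<union> (fst ` C1 \<union> snd ` C1)"
    by (force simp: W_def)
  then have "negligible (E - W)"
    using C1(1,4) negligible_countable by (metis countable_image negligible_Un negligible_subset)
  have fine_W: "\<exists>c d. c < d \<and> c \<le> x \<and> x \<le> d \<and> d - c < e \<and> Q c d" if "x \<in> E \<inter> W" "0 < e" for x e
    using that fine_Q[of x e] by blast
  obtain C2 where C2: "countable C2" "\<And>c d. (c, d) \<in> C2 \<Longrightarrow> c < d \<and> {c..d} \<subseteq> W \<and> Q c d"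
    "disjoint_family_on (\<lambda>(c, d). {c..d}) C2" "negligible (E \<inter> W - (\<Union>(c, d)\<in>C2. {c..d}))"
    using Vitali_covering_intervals[OF \<open>open W\<close> Int_lower2 fine_W] by blast
  show ?thesis
  proof
    show "countable C1" "disjoint_family_on (\<lambda>(c, d). {c..d}) C1"
      "countable C2" "disjoint_family_on (\<lambda>(c, d). {c..d}) C2"
      using C1 C2 by blast+
    show "c < d \<and> {c..d} \<subseteq> U \<and> P c d" if "(c, d) \<in> C1" for c d using C1(2)[OF that] .
    show "c < d \<and> Q c d" if "(c, d) \<in> C2" for c d using C2(2)[OF that] by blast
    have "W \<subseteq> (\<Union>(c, d)\<in>C1. {c..d})" by (auto simp: W_def)
    then show "(\<Union>(c, d)\<in>C2. {c..d}) \<subseteq> (\<Union>(c, d)\<in>C1. {c..d})"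
      using C2(2) by force
    have "E - (\<Union>(c, d)\<in>C2. {c..d}) \<subseteq> (E - W) \<union> (E \<inter> W - (\<Union>(c, d)\<in>C2. {c..d}))" by blast
    then show "negligible (E - (\<Union>(c, d)\<in>C2. {c..d}))"
      using \<open>negligible (E - W)\<close> C2(4) negligible_Un negligible_subset by metis
  qed
qed

lemma mono_slope_gap_emeasure_le:
  fixes \<phi> :: "real \<Rightarrow> real" and E U :: "real set"
  assumes mono: "mono \<phi>" and cont: "continuous_on UNIV \<phi>" and U: "open U" "E \<subseteq> U"
    and below: "\<And>x e. x \<in> E \<Longrightarrow> 0 < e \<Longrightarrow>
                  \<exists>c d. c < d \<and> c \<le> x \<and> x \<le> d \<and> d - c < e \<and> \<phi> d - \<phi> c < p * (d - c)"
    and above: "\<And>x e. x \<in> E \<Longrightarrow> 0 < e \<Longrightarrow>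
                  \<exists>c d. c < d \<and> c \<le> x \<and> x \<le> d \<and> d - c < e \<and> q * (d - c) < \<phi> d - \<phi> c"
  shows "ennreal q * emeasure lebesgue E \<le> ennreal p * emeasure lebesgue U"
proof -
  \<comment> \<open>With the Lebesgue-Stieltjes measure \<open>\<mu>\<close> of \<open>\<phi>\<close>, intervals of slope \<open>< p\<close> in the outer cover and
     of slope \<open>> q\<close> in the inner one give \<open>q \<lambda>(E) \<le> \<mu>(V2) \<le> \<mu>(V1) \<le> p \<lambda>(U)\<close>.\<close>
  let ?\<mu> = "interval_measure \<phi>"
  have \<mu>_Icc: "emeasure ?\<mu> {c..d} = ennreal (\<phi> d - \<phi> c)" if "c \<le> d" for c d
    using emeasure_interval_measure_Icc[OF that _ cont] mono by (simp add: mono_def)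
  obtain C1 C2 where C1: "countable C1" "disjoint_family_on (\<lambda>(c, d). {c..d}) C1"
      "\<And>c d. (c, d) \<in> C1 \<Longrightarrow> c < d \<and> {c..d} \<subseteq> U \<and> \<phi> d - \<phi> c < p * (d - c)"
    and C2: "countable C2" "disjoint_family_on (\<lambda>(c, d). {c..d}) C2"
      "\<And>c d. (c, d) \<in> C2 \<Longrightarrow> c < d \<and> q * (d - c) < \<phi> d - \<phi> c"
    and nested: "(\<Union>(c, d)\<in>C2. {c..d}) \<subseteq> (\<Union>(c, d)\<in>C1. {c..d})"
    and covers: "negligible (E - (\<Union>(c, d)\<in>C2. {c..d}))"
    using Vitali_nested_covering_intervals[OF U below above] by blast
  define V1 where "V1 = (\<Union>(c, d)\<in>C1. {c..d})"
  define V2 where "V2 = (\<Union>(c, d)\<in>C2. {c..d})"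
  have "V1 \<in> sets borel" "V2 \<in> sets borel"
    using C1(1) C2(1) by (auto simp: V1_def V2_def intro!: sets.countable_UN'')
  then have "V2 \<in> sets lebesgue" by simp
  have "emeasure lebesgue E \<le> emeasure lebesgue (V2 \<union> (E - V2))"
    using covers unfolding V2_def[symmetric]
    by (intro emeasure_mono sets.Un[OF \<open>V2 \<in> sets lebesgue\<close>] negligible_imp_sets) blast+
  also have "\<dots> = emeasure lebesgue V2"
    using \<open>V2 \<in> sets lebesgue\<close> covers
    by (intro emeasure_Un_null_set) (auto simp: V2_def negligible_iff_null_sets)
  finally have "ennreal q * emeasure lebesgue E \<le> ennreal q * emeasure lebesgue V2"
    by (rule mult_left_mono) simp
  also have "\<dots> \<le> 1 * emeasure ?\<mu> V2"
    unfolding V2_def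
  proof (intro emeasure_disjoint_UN_compare C2(1,2))
    fix i assume "i \<in> C2"
    then obtain c d where "i = (c, d)" "c < d" "q * (d - c) < \<phi> d - \<phi> c" using C2(3) by (cases i) blast
    then show "ennreal q * emeasure lebesgue ((\<lambda>(c, d). {c..d}) i) \<le> 1 * emeasure ?\<mu> ((\<lambda>(c, d). {c..d}) i)"
      by (simp add: \<mu>_Icc ennreal_mult''[symmetric] ennreal_leI)
  qed auto
  also have "\<dots> \<le> 1 * emeasure ?\<mu> V1"
    using nested \<open>V1 \<in> sets borel\<close> by (simp add: V1_def V2_def emeasure_mono)
  also have "\<dots> \<le> ennreal p * emeasure lebesgue V1"
    unfolding V1_def
  proof (intro emeasure_disjoint_UN_compare C1(1,2))
    fix i assume "i \<in> C1"
    then obtain c d where "i = (c, d)" "c < d" "\<phi> d - \<phi> c < p * (d - c)" using C1(3) by (cases i) blast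
    then show "1 * emeasure ?\<mu> ((\<lambda>(c, d). {c..d}) i) \<le> ennreal p * emeasure lebesgue ((\<lambda>(c, d). {c..d}) i)"
      by (simp add: \<mu>_Icc ennreal_mult''[symmetric] ennreal_leI)
  qed auto
  also have "\<dots> \<le> ennreal p * emeasure lebesgue U"
    using C1(3) U(1) by (intro mult_left_mono emeasure_mono) (auto simp: V1_def)
  finally show ?thesis .
qed

lemma mono_slope_gap_measure_le:
  fixes \<phi> :: "real \<Rightarrow> real" and E :: "real set"
  assumes mono: "mono \<phi>" and cont: "continuous_on UNIV \<phi>"
    and E: "E \<in> lmeasurable" and "0 < p" "0 < e"
    and below: "\<And>x e. x \<in> E \<Longrightarrow> 0 < e \<Longrightarrow>
                  \<exists>c d. c < d \<and> c \<le> x \<and> x \<le> d \<and> d - c < e \<and> \<phi> d - \<phi> c < p * (d - c)"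
    and above: "\<And>x e. x \<in> E \<Longrightarrow> 0 < e \<Longrightarrow>
                  \<exists>c d. c < d \<and> c \<le> x \<and> x \<le> d \<and> d - c < e \<and> q * (d - c) < \<phi> d - \<phi> c"
  shows "q * measure lebesgue E \<le> p * (measure lebesgue E + e)"
proof -
  define s where "s = measure lebesgue E"
  have "0 \<le> s" by (simp add: s_def)
  obtain U where U: "open U" "E \<subseteq> U" "U - E \<in> lmeasurable" "emeasure lebesgue (U - E) < ennreal e"
    using sets_lebesgue_outer_open[OF fmeasurableD[OF E] \<open>0 < e\<close>] by blast
  have "emeasure lebesgue U = emeasure lebesgue (E \<union> (U - E))"
    using U(2) by (simp add: Un_absorb1)
  also have "\<dots> \<le> emeasure lebesgue E + emeasure lebesgue (U - E)"
    using fmeasurableD[OF E] fmeasurableD[OF U(3)] by (rule emeasure_subadditive)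
  also have "\<dots> \<le> ennreal s + ennreal e"
    using U(4) E by (simp add: s_def emeasure_eq_measure2 add_left_mono)
  also have "\<dots> = ennreal (s + e)"
    using \<open>0 < e\<close> \<open>0 \<le> s\<close> by (simp add: ennreal_plus)
  finally have U_le: "emeasure lebesgue U \<le> ennreal (s + e)" .
  have "ennreal q * ennreal s \<le> ennreal p * emeasure lebesgue U"
    using mono_slope_gap_emeasure_le[OF mono cont U(1,2) below above] E
    by (simp add: s_def emeasure_eq_measure2)
  also have "\<dots> \<le> ennreal p * ennreal (s + e)"
    using U_le by (rule mult_left_mono) simp
  finally show ?thesis
    using \<open>0 < p\<close> \<open>0 < e\<close> \<open>0 \<le> s\<close>
    by (simp add: s_def ennreal_mult''[symmetric] ennreal_le_iff del: ennreal_plus)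
qed

lemma mono_slope_gap_negligible:
  fixes \<phi> :: "real \<Rightarrow> real" and E :: "real set"
  assumes mono: "mono \<phi>" and cont: "continuous_on UNIV \<phi>"
    and "p < q" and E: "E \<in> sets lebesgue"
    and below: "\<And>x e. x \<in> E \<Longrightarrow> 0 < e \<Longrightarrow>
                  \<exists>c d. c < d \<and> c \<le> x \<and> x \<le> d \<and> d - c < e \<and> \<phi> d - \<phi> c < p * (d - c)"
    and above: "\<And>x e. x \<in> E \<Longrightarrow> 0 < e \<Longrightarrow>
                  \<exists>c d. c < d \<and> c \<le> x \<and> x \<le> d \<and> d - c < e \<and> q * (d - c) < \<phi> d - \<phi> c"
  shows "negligible E"
proof (subst negligible_on_intervals, intro allI)
  fix u v :: real
  let ?E = "E \<inter> cbox u v"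
  show "negligible ?E"
  proof (cases "?E = {}")
    case False
    then obtain x where "x \<in> E" by blast
    then obtain c d where "c < d" "\<phi> d - \<phi> c < p * (d - c)" using below[of x 1] by auto
    moreover have "\<phi> c \<le> \<phi> d" using mono \<open>c < d\<close> by (simp add: monoD)
    ultimately have "0 < p" by (smt (verit) mult_nonpos_nonneg)
    have "?E \<in> lmeasurable" using E by (intro bounded_set_imp_lmeasurable) auto
    have "q * measure lebesgue ?E \<le> p * measure lebesgue ?E + e" if "0 < e" for e
      using mono_slope_gap_measure_le[OF mono cont \<open>?E \<in> lmeasurable\<close> \<open>0 < p\<close>, of "e / p" q]
        below above \<open>0 < e\<close> \<open>0 < p\<close>
      by (simp add: algebra_simps)
    then have "(q - p) * measure lebesgue ?E \<le> 0"
      by (simp add: field_le_epsilon algebra_simps)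
    then show ?thesis
      using \<open>p < q\<close> \<open>?E \<in> lmeasurable\<close> by (simp add: mult_le_0_iff measure_le_0_iff negligible_iff_measure)
  qed simp
qed

section \<open>Monotone Lipschitz functions are differentiable almost everywhere\<close>

lemma tendsto_if_no_rational_oscillation:
  fixes g :: "'a \<Rightarrow> real"
  assumes F: "F \<noteq> bot" and bounded: "eventually (\<lambda>y. \<bar>g y\<bar> \<le> M) F"
    and no_gap: "\<And>p q. p \<in> \<rat> \<Longrightarrow> q \<in> \<rat> \<Longrightarrow> p < q \<Longrightarrow>
                   \<not> ((\<exists>\<^sub>F y in F. g y < p) \<and> (\<exists>\<^sub>F y in F. q < g y))"
  obtains l where "(g \<longlongrightarrow> l) F"
proof -
  let ?lo = "Liminf F (\<lambda>y. ereal (g y))" and ?hi = "Limsup F (\<lambda>y. ereal (g y))"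
  have "ereal (- M) \<le> ?lo"
    by (rule Liminf_bounded) (use bounded in \<open>auto elim!: eventually_mono\<close>)
  moreover have "?hi \<le> ereal M"
    by (rule Limsup_bounded) (use bounded in \<open>auto elim!: eventually_mono\<close>)
  moreover have "?lo \<le> ?hi"
    using F by (intro Liminf_le_Limsup) auto
  ultimately obtain lo hi where lo: "?lo = ereal lo" and hi: "?hi = ereal hi"
    by (cases ?lo; cases ?hi) auto
  have "\<not> lo < hi"
  proof
    assume "lo < hi"
    then obtain p q where pq: "p \<in> \<rat>" "q \<in> \<rat>" "lo < p" "p < q" "q < hi"
      by (meson Rats_dense_in_real less_trans)
    have "\<not> ereal p \<le> ?lo" using pq(3) lo by simp
    then obtain y where y: "y < ereal p" "\<not> eventually (\<lambda>x. y < ereal (g x)) F"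
      unfolding le_Liminf_iff by blast
    have below: "\<exists>\<^sub>F x in F. g x < p"
      using y(2) unfolding not_eventually
      by (rule frequently_elim1) (use y(1) in \<open>cases y; simp\<close>)
    have "\<not> ?hi \<le> ereal q" using pq(5) hi by simp
    then obtain z where z: "ereal q < z" "\<not> eventually (\<lambda>x. ereal (g x) < z) F"
      unfolding Limsup_le_iff by blast
    have above: "\<exists>\<^sub>F x in F. q < g x"
      using z(2) unfolding not_eventually
      by (rule frequently_elim1) (use z(1) in \<open>cases z; simp\<close>)
    show False using no_gap[OF pq(1,2,4)] below above by blast
  qed
  then have "?lo = ereal lo" "?hi = ereal lo"
    using lo hi \<open>?lo \<le> ?hi\<close> by auto
  then have "((\<lambda>y. ereal (g y)) \<longlongrightarrow> ereal lo) F"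
    using F by (intro Liminf_eq_Limsup) auto
  then show ?thesis using that by simp
qed

lemma frequently_difference_quotient_in_open_borel:
  fixes \<phi> :: "real \<Rightarrow> real" and T :: "real set"
  assumes cont: "continuous_on UNIV \<phi>" and "open T"
  shows "{x. \<exists>\<^sub>F y in at x. (\<phi> y - \<phi> x) / (y - x) \<in> T} \<in> sets borel"
proof -
  define B where "B n y = (ball y (1 / Suc n) - {y}) \<inter> (\<lambda>x. (\<phi> y - \<phi> x) / (y - x)) -` T" for n :: nat and y
  have "open (B n y)" for n y
  proof -
    have "continuous_on (ball y (1 / Suc n) - {y}) (\<lambda>x. (\<phi> y - \<phi> x) / (y - x))"
      by (intro continuous_intros continuous_on_subset[OF cont]) auto
    then show ?thesis unfolding B_def using \<open>open T\<close> by (intro continuous_open_preimage) auto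
  qed
  have "{x. \<exists>\<^sub>F y in at x. (\<phi> y - \<phi> x) / (y - x) \<in> T} = (\<Inter>n. \<Union>y. B n y)"
  proof (intro equalityI subsetI)
    fix x assume "x \<in> {x. \<exists>\<^sub>F y in at x. (\<phi> y - \<phi> x) / (y - x) \<in> T}"
    then have "\<exists>y. y \<noteq> x \<and> dist y x < 1 / Suc n \<and> (\<phi> y - \<phi> x) / (y - x) \<in> T" for n
      unfolding frequently_at by simp
    then show "x \<in> (\<Inter>n. \<Union>y. B n y)"
      by (force simp: B_def dist_commute)
  next
    fix x assume x: "x \<in> (\<Inter>n. \<Union>y. B n y)"
    show "x \<in> {x. \<exists>\<^sub>F y in at x. (\<phi> y - \<phi> x) / (y - x) \<in> T}"
      unfolding mem_Collect_eq frequently_at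
    proof (intro allI impI)
      fix d :: real assume "0 < d"
      then obtain n where "1 / Suc n < d" using nat_approx_posE by blast
      moreover obtain y where "x \<in> B n y" using x by blast
      ultimately show "\<exists>y\<in>UNIV. y \<noteq> x \<and> dist y x < d \<and> (\<phi> y - \<phi> x) / (y - x) \<in> T"
        by (intro bexI[of _ y]) (auto simp: B_def dist_commute)
    qed
  qed
  also have "\<dots> \<in> sets borel"
    using \<open>\<And>n y. open (B n y)\<close> by (intro sets.countable_INT'' borel_open open_UN) auto
  finally show ?thesis .
qed

lemma mono_lipschitz_differentiable_ae:
  fixes \<phi> :: "real \<Rightarrow> real"
  assumes mono: "mono \<phi>" and lip: "M-lipschitz_on UNIV \<phi>"
  shows "negligible {x. \<not> \<phi> differentiable (at x)}"
proof -
  have cont: "continuous_on UNIV \<phi>" using lip by (rule lipschitz_on_continuous_on)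
  define Q where "Q x y = (\<phi> y - \<phi> x) / (y - x)" for x y
  define Lo where "Lo p = {x. \<exists>\<^sub>F y in at x. Q x y \<in> {..<p}}" for p
  define Hi where "Hi q = {x. \<exists>\<^sub>F y in at x. Q x y \<in> {q<..}}" for q
  have Q_bound: "\<bar>Q x y\<bar> \<le> M" for x y
    using lipschitz_onD[OF lip, of y x] lipschitz_on_nonneg[OF lip]
    by (cases "x = y") (auto simp: Q_def dist_real_def abs_divide divide_le_eq)
  have slope: "\<exists>c d. c < d \<and> c \<le> x \<and> x \<le> d \<and> d - c < e \<and> \<phi> d - \<phi> c = Q x y * (d - c)"
    if "y \<noteq> x" "dist y x < e" for x y e
    using that by (intro exI[of _ "min x y"] exI[of _ "max x y"])
      (auto simp: Q_def dist_real_def field_simps min_def max_def)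
  have gap: "negligible (Lo p \<inter> Hi q)" if "p < q" for p q
  proof (rule mono_slope_gap_negligible[OF mono cont that])
    show "Lo p \<inter> Hi q \<in> sets lebesgue"
      using frequently_difference_quotient_in_open_borel[OF cont, of "{..<p}"]
        frequently_difference_quotient_in_open_borel[OF cont, of "{q<..}"]
      by (auto simp: Lo_def Hi_def Q_def)
  next
    fix x e :: real assume "x \<in> Lo p \<inter> Hi q" "0 < e"
    then obtain y where "y \<noteq> x" "dist y x < e" "Q x y < p"
      by (auto simp: Lo_def frequently_at)
    with slope show "\<exists>c d. c < d \<and> c \<le> x \<and> x \<le> d \<and> d - c < e \<and> \<phi> d - \<phi> c < p * (d - c)"
      by (metis diff_gt_0_iff_gt mult_strict_right_mono)
  next
    fix x e :: real assume "x \<in> Lo p \<inter> Hi q" "0 < e"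
    then obtain y where "y \<noteq> x" "dist y x < e" "q < Q x y"
      by (auto simp: Hi_def frequently_at)
    with slope show "\<exists>c d. c < d \<and> c \<le> x \<and> x \<le> d \<and> d - c < e \<and> q * (d - c) < \<phi> d - \<phi> c"
      by (metis diff_gt_0_iff_gt mult_strict_right_mono)
  qed
  define R where "R = {(p :: real, q). p \<in> \<rat> \<and> q \<in> \<rat> \<and> p < q}"
  have "{x. \<not> \<phi> differentiable (at x)} \<subseteq> (\<Union>(p, q)\<in>R. Lo p \<inter> Hi q)"
  proof (intro subsetI, rule ccontr)
    fix x assume "x \<in> {x. \<not> \<phi> differentiable (at x)}" and "x \<notin> (\<Union>(p, q)\<in>R. Lo p \<inter> Hi q)"
    then have no_gap: "\<not> ((\<exists>\<^sub>F y in at x. Q x y < p) \<and> (\<exists>\<^sub>F y in at x. q < Q x y))"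
      if "p \<in> \<rat>" "q \<in> \<rat>" "p < q" for p q
      using that by (auto simp: R_def Lo_def Hi_def)
    obtain l where "(Q x \<longlongrightarrow> l) (at x)"
      using tendsto_if_no_rational_oscillation[of "at x" "Q x" M] no_gap Q_bound by auto
    then have "(\<phi> has_field_derivative l) (at x)"
      by (simp add: has_field_derivative_iff Q_def[abs_def])
    with \<open>x \<in> {x. \<not> \<phi> differentiable (at x)}\<close> show False
      by (auto simp: real_differentiable_def)
  qed
  moreover have "countable R"
    by (rule countable_subset[of _ "\<rat> \<times> \<rat>"]) (auto simp: R_def countable_rat)
  then have "negligible (\<Union>(p, q)\<in>R. Lo p \<inter> Hi q)"
    using gap by (intro negligible_countable_Union countable_image) (auto simp: R_def)
  ultimately show ?thesis by (rule negligible_subset[rotated])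
qed

lemma lipschitz_differentiable_ae:
  fixes g :: "real \<Rightarrow> real"
  assumes lip: "L-lipschitz_on UNIV g"
  shows "negligible {x. \<not> g differentiable (at x)}"
proof -
  define \<phi> where "\<phi> x = g x + L * x" for x
  have "mono \<phi>"
  proof (rule monoI)
    fix x y :: real assume "x \<le> y"
    with lipschitz_onD[OF lip, of x y] show "\<phi> x \<le> \<phi> y"
      by (simp add: \<phi>_def dist_real_def abs_le_iff algebra_simps)
  qed
  moreover have "(L + L * 1)-lipschitz_on UNIV \<phi>"
    unfolding \<phi>_def using lipschitz_on_nonneg[OF lip]
    by (intro lipschitz_on_add lip lipschitz_on_cmult_real_nonneg lipschitz_on_id)
  ultimately have "negligible {x. \<not> \<phi> differentiable (at x)}"
    by (rule mono_lipschitz_differentiable_ae)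
  moreover have "g = (\<lambda>x. \<phi> x - L * x)" by (simp add: \<phi>_def)
  then have "{x. \<not> g differentiable (at x)} \<subseteq> {x. \<not> \<phi> differentiable (at x)}"
    by auto
  ultimately show ?thesis by (rule negligible_subset)
qed

section \<open>The fundamental theorem of calculus for Lipschitz functions\<close>

lemma negligible_lipschitz_image:
  fixes f :: "'a::euclidean_space \<Rightarrow> 'a"
  assumes "L-lipschitz_on UNIV f" and "negligible S"
  shows "negligible (f ` S)"
  using assms(2) lipschitz_onD[OF assms(1)]
  by (intro negligible_locally_Lipschitz_image) (auto simp: dist_norm intro!: exI[of _ UNIV])

lemma mono_lipschitz_measure_image:
  fixes \<phi> :: "real \<Rightarrow> real"
  assumes mono: "mono \<phi>" and lip: "M-lipschitz_on UNIV \<phi>" and "a \<le> b"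
    and "D \<subseteq> {a..b}" and neg: "negligible ({a..b} - D)"
  shows "\<phi> ` D \<in> lmeasurable" and "measure lebesgue (\<phi> ` D) = \<phi> b - \<phi> a"
proof -
  have image: "\<phi> ` {a..b} = {\<phi> a..\<phi> b}"
  proof
    show "\<phi> ` {a..b} \<subseteq> {\<phi> a..\<phi> b}" using mono by (auto simp: monoD)
    show "{\<phi> a..\<phi> b} \<subseteq> \<phi> ` {a..b}"
      using IVT'[of \<phi> a _ b] \<open>a \<le> b\<close> continuous_on_subset[OF lipschitz_on_continuous_on[OF lip]]
      by (force simp: image_iff)
  qed
  have "{\<phi> a..\<phi> b} - \<phi> ` D \<subseteq> \<phi> ` ({a..b} - D)" using image by blast
  then have "negligible ({\<phi> a..\<phi> b} - \<phi> ` D)"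
    using negligible_lipschitz_image[OF lip neg] negligible_subset by blast
  moreover have "\<phi> ` D \<subseteq> {\<phi> a..\<phi> b}" using image \<open>D \<subseteq> {a..b}\<close> by blast
  ultimately show "\<phi> ` D \<in> lmeasurable" "measure lebesgue (\<phi> ` D) = \<phi> b - \<phi> a"
    using lmeasurable_negligible_symdiff[of "{\<phi> a..\<phi> b}" "\<phi> ` D"]
      measure_negligible_symdiff[of "{\<phi> a..\<phi> b}" "\<phi> ` D"] mono \<open>a \<le> b\<close>
    by (auto simp: Un_absorb2 monoD)
qed

lemma strict_mono_lipschitz_has_integral_deriv:
  fixes \<phi> :: "real \<Rightarrow> real"
  assumes mono: "strict_mono \<phi>" and lip: "M-lipschitz_on UNIV \<phi>" and "a \<le> b"
  shows "(deriv \<phi> has_integral \<phi> b - \<phi> a) {a..b}"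
proof -
  define D where "D = {x \<in> {a<..<b}. \<phi> differentiable (at x)}"
  have "D \<subseteq> {a..b}" by (auto simp: D_def)
  have "{a..b} - D \<subseteq> {a, b} \<union> {x. \<not> \<phi> differentiable (at x)}" by (auto simp: D_def)
  then have neg: "negligible ({a..b} - D)"
    by (rule negligible_subset[rotated]) (simp add: lipschitz_differentiable_ae[OF lip])
  then have "D \<in> lmeasurable"
    using lmeasurable_negligible_symdiff[of "{a..b}" D] \<open>D \<subseteq> {a..b}\<close> by (simp add: Un_absorb2)
  have der: "(\<phi> has_field_derivative deriv \<phi> x) (at x)" if "x \<in> D" for x
    using that by (simp add: D_def DERIV_deriv_iff_real_differentiable)
  have deriv_nonneg: "0 \<le> deriv \<phi> x" if "x \<in> D" for x
    using mono_on_imp_deriv_nonneg[where A=UNIV, OF _ der[OF that]] strict_mono_mono[OF mono]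
    by (simp add: mono_on_def monoD)
  have "inj_on \<phi> D" using mono by (metis inj_onI strict_mono_eq)
  then have "(\<lambda>x. \<bar>deriv \<phi> x\<bar> * 1) absolutely_integrable_on D \<and>
      integral D (\<lambda>x. \<bar>deriv \<phi> x\<bar> * 1) = \<phi> b - \<phi> a"
    using has_absolute_integral_change_of_variables_1'[OF fmeasurableD[OF \<open>D \<in> lmeasurable\<close>]
        has_field_derivative_at_within[OF der], of "\<lambda>_. 1"]
      mono_lipschitz_measure_image[OF strict_mono_mono[OF mono] lip \<open>a \<le> b\<close> \<open>D \<subseteq> {a..b}\<close> neg]
    by (simp add: lmeasurable_iff_integrable_on lmeasure_integral absolutely_integrable_on_iff_nonneg)
  then have "((\<lambda>x. \<bar>deriv \<phi> x\<bar>) has_integral \<phi> b - \<phi> a) D"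
    by (simp add: has_integral_iff absolutely_integrable_on_def)
  then have "(deriv \<phi> has_integral \<phi> b - \<phi> a) D"
    by (rule has_integral_eq[rotated]) (simp add: deriv_nonneg)
  moreover have "negligible {x \<in> {a..b} - D. deriv \<phi> x \<noteq> 0}"
    using neg by (rule negligible_subset) blast
  ultimately show ?thesis
    using has_integral_spike_set_eq[of D "{a..b}" "deriv \<phi>"] \<open>D \<subseteq> {a..b}\<close>
    by (simp add: Diff_eq_empty_iff[THEN iffD2])
qed

lemma lipschitz_has_integral_deriv:
  fixes g :: "real \<Rightarrow> real"
  assumes lip: "L-lipschitz_on UNIV g" and "a \<le> b"
  shows "(deriv g has_integral g b - g a) {a..b}"
proof -
  define \<phi> where "\<phi> x = g x + (L + 1) * x" for x
  have "strict_mono \<phi>"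
  proof (rule strict_monoI)
    fix x y :: real assume "x < y"
    with lipschitz_onD[OF lip, of x y] show "\<phi> x < \<phi> y"
      by (simp add: \<phi>_def dist_real_def abs_le_iff algebra_simps)
  qed
  moreover have "(L + (L + 1) * 1)-lipschitz_on UNIV \<phi>"
    unfolding \<phi>_def using lipschitz_on_nonneg[OF lip]
    by (intro lipschitz_on_add lip lipschitz_on_cmult_real_nonneg lipschitz_on_id) simp
  ultimately have "(deriv \<phi> has_integral \<phi> b - \<phi> a) {a..b}"
    using \<open>a \<le> b\<close> by (rule strict_mono_lipschitz_has_integral_deriv)
  then have int: "((\<lambda>x. deriv \<phi> x - (L + 1)) has_integral g b - g a) {a..b}"
    using has_integral_diff[OF _ has_integral_const_real[of "L + 1" a b]] \<open>a \<le> b\<close>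
    by (force simp: \<phi>_def algebra_simps)
  have deriv_eq: "deriv g x = deriv \<phi> x - (L + 1)" if "g differentiable (at x)" for x
  proof -
    have "(\<phi> has_field_derivative deriv g x + (L + 1)) (at x)"
      using that unfolding \<phi>_def
      by (auto intro!: derivative_eq_intros simp: DERIV_deriv_iff_real_differentiable[symmetric])
    then show ?thesis by (simp add: DERIV_imp_deriv)
  qed
  show ?thesis
    by (rule has_integral_spike[OF lipschitz_differentiable_ae[OF lip] _ int]) (simp add: deriv_eq)
qed

lemma lipschitz_on_clamp: "1-lipschitz_on UNIV (\<lambda>x::real. max a (min b x))"
  by (rule lipschitz_onI) (auto simp: dist_real_def max_def min_def abs_if)

lemma lipschitz_has_integral_deriv_level_band:
  fixes f :: "real \<Rightarrow> real"
  assumes lip: "L-lipschitz_on {c..d} f" and "c \<le> d" and "a \<le> b"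
  shows "(deriv f has_integral max a (min b (f d)) - max a (min b (f c)))
           {t \<in> {c..d}. f t \<in> {a<..<b}}"
proof -
  define G where "G x = max a (min b (f (max c (min d x))))" for x
  let ?T = "{t \<in> {c..d}. f t \<in> {a<..<b}}"
  have "(L * 1)-lipschitz_on UNIV (\<lambda>x. f (max c (min d x)))"
    using \<open>c \<le> d\<close> by (intro lipschitz_on_compose2 lipschitz_on_clamp lipschitz_on_mono[OF lip]) auto
  then have "(1 * (L * 1))-lipschitz_on UNIV G"
    unfolding G_def
    by (rule lipschitz_on_compose2[where g="\<lambda>y. max a (min b y)"])
      (rule lipschitz_on_mono[OF lipschitz_on_clamp]; simp)
  then have lipG: "L-lipschitz_on UNIV G" by simp
  define N where "N = {c, d} \<union> {x. \<not> G differentiable (at x)}"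
  have "negligible N" using lipschitz_differentiable_ae[OF lipG] by (simp add: N_def)
  have deriv_G_zero: "deriv G t = 0" if "t \<in> {c..d} - ?T - N" for t
  proof -
    have der: "(G has_real_derivative deriv G t) (at t)"
      using that by (auto simp: N_def DERIV_deriv_iff_real_differentiable)
    have bounds: "a \<le> G y" "G y \<le> b" for y using \<open>a \<le> b\<close> by (auto simp: G_def)
    have "G t = a \<or> G t = b"
      using that \<open>a \<le> b\<close> by (auto simp: G_def)
    then show ?thesis
    proof
      assume "G t = a"
      then show ?thesis by (intro DERIV_local_min[OF der zero_less_one]) (simp add: bounds)
    next
      assume "G t = b"
      then show ?thesis by (intro DERIV_local_max[OF der zero_less_one]) (simp add: bounds)
    qed
  qed
  have "(deriv G has_integral G d - G c) ?T"
  proof (rule has_integral_spike_set_eq[THEN iffD1, OF _ _ lipschitz_has_integral_deriv[OF lipG \<open>c \<le> d\<close>]])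
    show "negligible {t \<in> {c..d} - ?T. deriv G t \<noteq> 0}"
      using \<open>negligible N\<close> by (rule negligible_subset) (use deriv_G_zero in blast)
    show "negligible {t \<in> ?T - {c..d}. deriv G t \<noteq> 0}"
      by (rule negligible_subset[of "{}"]) auto
  qed
  moreover have "deriv f t = deriv G t" if "t \<in> ?T - N" for t
  proof (rule deriv_cong_ev[OF _ refl])
    have t: "t \<in> {c<..<d}" "f t \<in> {a<..<b}" using that by (auto simp: N_def)
    have "continuous_on {c<..<d} f"
      using lipschitz_on_continuous_on[OF lip] by (rule continuous_on_subset) auto
    then have "open ({c<..<d} \<inter> f -` {a<..<b})"
      by (intro continuous_open_preimage) auto
    then have "eventually (\<lambda>y. y \<in> {c<..<d} \<inter> f -` {a<..<b}) (nhds t)"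
      using t by (intro eventually_nhds_in_open) auto
    then show "eventually (\<lambda>y. f y = G y) (nhds t)"
      by eventually_elim (auto simp: G_def)
  qed
  ultimately show ?thesis
    using \<open>c \<le> d\<close> \<open>negligible N\<close> by (auto simp: G_def intro: has_integral_spike)
qed

theorem mainTheorem7:
  fixes f :: "real \<Rightarrow> real" and a b :: real
  assumes "\<exists>L. L-lipschitz_on {0..1} f"
    and "a < b"
  shows "a - b \<le> (LINT t : {t \<in> {0..1}. f t \<in> {a<..<b}} | lborel. deriv f t)
       \<and> (LINT t : {t \<in> {0..1}. f t \<in> {a<..<b}} | lborel. deriv f t) \<le> b - a"
proof -
  obtain L where L: "L-lipschitz_on {0..1} f" using assms(1) by blast
  define T where "T = {t \<in> {0..1}. f t \<in> {a<..<b}}"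
  define I where "I = max a (min b (f 1)) - max a (min b (f 0))"
  have "(deriv f has_integral I) T"
    unfolding T_def I_def using \<open>a < b\<close> by (intro lipschitz_has_integral_deriv_level_band[OF L]) auto
  have "a - b \<le> I" "I \<le> b - a" using \<open>a < b\<close> by (auto simp: I_def)
  \<comment> \<open>The Lebesgue integral is 0 by convention if \<open>deriv f\<close> is not integrable on \<open>T\<close>.\<close>
  moreover have "(LINT t : T | lborel. deriv f t) \<in> {I, 0}"
  proof (cases "set_integrable lborel T (deriv f)")
    case True
    then show ?thesis
      using \<open>(deriv f has_integral I) T\<close> by (simp add: set_borel_integral_eq_integral integral_unique)
  next
    case False
    then show ?thesis
      by (simp add: set_integrable_def set_lebesgue_integral_def not_integrable_integral_eq)
  qed
  ultimately show ?thesis using \<open>a < b\<close> by (auto simp: T_def)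
qed

end
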